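(* Let $\mathbf{a}_1,\ldots,\mathbf{a}_m\in\mathbb{R}^d$ and let $\mathbf{y}\in\mathbb{R}^d$ lie in the convex hull of $\mathbf{a}_1,\ldots,\mathbf{a}_m$. Let $\mathbf{x}\in\mathbb{R}^m$ be a solution to the optimization problem $$\min_{\mathbf{x}\in\mathbb{R}^m}\ \sum_{j=1}^m x_j\|\mathbf{y}-\mathbf{a}_j\|^2\quad\text{subject to}\quad \mathbf{y}=\sum_{j=1}^m x_j\mathbf{a}_j,\quad \sum_{j=1}^m x_j=1,\quad x_j\ge 0\ \text{for all } j.$$ If the points $\mathbf{a}_1,\ldots,\mathbf{a}_m$ have a unique Delaunay triangulation, then the set of points $\{\mathbf{a}_j : x_j\neq 0\}$ comprises the vertices of some face of this triangulation that contains $\mathbf{y}$.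
   Context: $\|\cdot\|$ is the Euclidean norm. A Delaunay triangulation of $\mathbf{a}_1,\ldots,\mathbf{a}_m$ is a triangulation of their convex hull into simplices (cells) with vertices among the $\mathbf{a}_j$ such that the circumscribed sphere of each cell contains no point $\mathbf{a}_j$ in its interior; a face of the triangulation is a face of one of its cells. *)

theory Defs
  imports "HOL-Analysis.Analysis"
begin

text \<open>A cell of a triangulation of the finite point set A is given by its vertex set V:
  an affinely independent subset of A whose number of points is one more than the
  (affine) dimension of A, i.e. a full-dimensional simplex (relative to the affine hull of A;
  when A spans R^d this is an ordinary d-simplex).\<close>
definition is_cell :: "'a::euclidean_space set \<Rightarrow> 'a set \<Rightarrow> bool" where
  "is_cell A V \<longleftrightarrow> V \<subseteq> A \<and> \<not> affine_dependent V \<and> int (card V) = aff_dim A + 1"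

definition is_triangulation :: "'a::euclidean_space set \<Rightarrow> 'a set set \<Rightarrow> bool" where
  "is_triangulation A T \<longleftrightarrow>
     (\<forall>V\<in>T. is_cell A V) \<and>
     \<Union>((\<lambda>V. convex hull V) ` T) = convex hull A \<and>
     (\<forall>V\<in>T. \<forall>W\<in>T. convex hull V \<inter> convex hull W = convex hull (V \<inter> W))"

definition empty_circumsphere :: "'a::euclidean_space set \<Rightarrow> 'a set \<Rightarrow> bool" where
  "empty_circumsphere A V \<longleftrightarrow>
     (\<exists>c r. c \<in> affine hull V \<and> (\<forall>v\<in>V. dist c v = r) \<and> (\<forall>p\<in>A. r \<le> dist c p))"

definition is_delaunay_triangulation :: "'a::euclidean_space set \<Rightarrow> 'a set set \<Rightarrow> bool" where
  "is_delaunay_triangulation A T \<longleftrightarrow>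
     is_triangulation A T \<and> (\<forall>V\<in>T. empty_circumsphere A V)"

definition feasible_weights ::
  "nat \<Rightarrow> (nat \<Rightarrow> 'a::euclidean_space) \<Rightarrow> 'a \<Rightarrow> (nat \<Rightarrow> real) \<Rightarrow> bool" where
  "feasible_weights m a y x \<longleftrightarrow>
     y = (\<Sum>j=1..m. x j *\<^sub>R a j) \<and> (\<Sum>j=1..m. x j) = 1 \<and> (\<forall>j\<in>{1..m}. x j \<ge> 0)"

definition objective :: "nat \<Rightarrow> (nat \<Rightarrow> 'a::euclidean_space) \<Rightarrow> 'a \<Rightarrow> (nat \<Rightarrow> real) \<Rightarrow> real" where
  "objective m a y x = (\<Sum>j=1..m. x j * (norm (y - a j))\<^sup>2)"

definition is_optimal_weights ::
  "nat \<Rightarrow> (nat \<Rightarrow> 'a::euclidean_space) \<Rightarrow> 'a \<Rightarrow> (nat \<Rightarrow> real) \<Rightarrow> bool" where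
  "is_optimal_weights m a y x \<longleftrightarrow>
     feasible_weights m a y x \<and>
     (\<forall>x'. feasible_weights m a y x' \<longrightarrow> objective m a y x \<le> objective m a y x')"

end

theory Submission
  imports Defs "HOL-Computational_Algebra.Polynomial"
begin

text \<open>
  Fix a Delaunay cell \<open>V\<close> containing \<open>y\<close>, with circumcentre \<open>c\<close> and radius \<open>r\<close>.
  For feasible weights the objective equals \<open>\<Sum>j. x\<^sub>j |c - a\<^sub>j|\<^sup>2 - |c - y|\<^sup>2\<close>;
  the barycentric coordinates of \<open>y\<close> in \<open>V\<close> attain \<open>r\<^sup>2 - |c - y|\<^sup>2\<close>, and since no
  \<open>a\<^sub>j\<close> lies inside the sphere, every \<open>a\<^sub>j\<close> with \<open>x\<^sub>j \<noteq> 0\<close> lies on it.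

  Delaunay triangulations are the regular triangulations of the lifting \<open>p \<mapsto> |p|\<^sup>2\<close>:
  the cells whose lifted hyperplane has no lifted point below it. If a point \<open>q\<close> other
  than a vertex of \<open>V\<close> lay on the circumsphere, perturbing the lifting to
  \<open>|p|\<^sup>2 \<plusminus> \<epsilon> f(p)\<close> with generic \<open>f\<close> would give two Delaunay triangulations, which by
  uniqueness both contain \<open>V\<close>; but the lifted \<open>q\<close> lies strictly below the hyperplane
  of \<open>V\<close> for one of the two signs. So the support of \<open>x\<close> consists of vertices of \<open>V\<close>
  and spans a face of \<open>V\<close> containing \<open>y\<close>.
\<close>

section \<open>Barycentric coordinates and affine interpolation\<close>

text \<open>Meaningful for finite affinely independent \<open>U\<close> and \<open>p \<in> affine hull U\<close>;
  otherwise \<open>SOME\<close> picks an arbitrary function.\<close>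

definition bary_coord :: "'a::real_vector set \<Rightarrow> 'a \<Rightarrow> 'a \<Rightarrow> real" where
  "bary_coord U p = (SOME c. sum c U = 1 \<and> (\<Sum>u\<in>U. c u *\<^sub>R u) = p)"

lemma affine_independent_coeffs_eq:
  fixes U :: "'a::real_vector set"
  assumes "\<not> affine_dependent U" "finite U" "sum c U = sum d U"
    and "(\<Sum>u\<in>U. c u *\<^sub>R u) = (\<Sum>u\<in>U. d u *\<^sub>R u)" "u \<in> U"
  shows "c u = d u"
proof (rule ccontr)
  assume "c u \<noteq> d u"
  have "sum (\<lambda>v. c v - d v) U = 0" using assms(3) by (simp add: sum_subtractf)
  moreover have "(\<Sum>v\<in>U. (c v - d v) *\<^sub>R v) = 0"
    using assms(4) by (simp add: scaleR_diff_left sum_subtractf)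
  ultimately have "affine_dependent U"
    using affine_dependent_explicit_finite[OF assms(2)] \<open>c u \<noteq> d u\<close> assms(5)
    by (metis eq_iff_diff_eq_0)
  with assms(1) show False by simp
qed

lemma bary_coord_represents:
  fixes U :: "'a::real_vector set"
  assumes "finite U" "p \<in> affine hull U"
  shows "sum (bary_coord U p) U = 1" "(\<Sum>u\<in>U. bary_coord U p u *\<^sub>R u) = p"
proof -
  have "\<exists>c. sum c U = 1 \<and> (\<Sum>u\<in>U. c u *\<^sub>R u) = p"
    using assms affine_hull_finite by blast
  then have "sum (bary_coord U p) U = 1 \<and> (\<Sum>u\<in>U. bary_coord U p u *\<^sub>R u) = p"
    unfolding bary_coord_def by (rule someI_ex)
  then show "sum (bary_coord U p) U = 1" "(\<Sum>u\<in>U. bary_coord U p u *\<^sub>R u) = p" by auto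
qed

lemma bary_coord_unique:
  fixes U :: "'a::real_vector set"
  assumes "\<not> affine_dependent U" "finite U" "sum c U = 1" "(\<Sum>u\<in>U. c u *\<^sub>R u) = p" "u \<in> U"
  shows "bary_coord U p u = c u"
proof -
  have "p \<in> affine hull U" using assms(2-4) affine_hull_finite by blast
  from bary_coord_represents[OF assms(2) this] show ?thesis
    using affine_independent_coeffs_eq[OF assms(1,2) _ _ assms(5)] assms(3,4) by simp
qed

lemma bary_coord_nonneg:
  fixes U :: "'a::real_vector set"
  assumes "\<not> affine_dependent U" "finite U" "z \<in> convex hull U" "u \<in> U"
  shows "0 \<le> bary_coord U z u"
proof -
  obtain c where "\<forall>v\<in>U. 0 \<le> c v" "sum c U = 1" "(\<Sum>v\<in>U. c v *\<^sub>R v) = z"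
    using assms(3) convex_hull_finite[OF assms(2)] by blast
  then show ?thesis using bary_coord_unique[OF assms(1,2)] assms(4) by simp
qed

lemma bary_coord_affine_combination:
  fixes U :: "'a::real_vector set"
  assumes "\<not> affine_dependent U" "finite U" "finite P" "sum \<mu> P = 1" "P \<subseteq> affine hull U"
    and "u \<in> U"
  shows "bary_coord U (\<Sum>p\<in>P. \<mu> p *\<^sub>R p) u = (\<Sum>p\<in>P. \<mu> p * bary_coord U p u)"
proof (rule bary_coord_unique[OF assms(1,2) _ _ assms(6)])
  have coords: "sum (bary_coord U p) U = 1" "(\<Sum>v\<in>U. bary_coord U p v *\<^sub>R v) = p"
    if "p \<in> P" for p
    using bary_coord_represents[OF assms(2)] assms(5) that by auto
  have "(\<Sum>v\<in>U. \<Sum>p\<in>P. \<mu> p * bary_coord U p v) = (\<Sum>p\<in>P. \<mu> p * sum (bary_coord U p) U)"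
    by (subst sum.swap) (simp add: sum_distrib_left)
  then show "(\<Sum>v\<in>U. \<Sum>p\<in>P. \<mu> p * bary_coord U p v) = 1"
    using coords(1) assms(4) by simp
  have "(\<Sum>v\<in>U. (\<Sum>p\<in>P. \<mu> p * bary_coord U p v) *\<^sub>R v)
      = (\<Sum>v\<in>U. \<Sum>p\<in>P. \<mu> p *\<^sub>R bary_coord U p v *\<^sub>R v)"
    by (simp add: scaleR_sum_left)
  also have "\<dots> = (\<Sum>p\<in>P. \<mu> p *\<^sub>R (\<Sum>v\<in>U. bary_coord U p v *\<^sub>R v))"
    by (subst sum.swap) (simp add: scaleR_sum_right)
  finally have "(\<Sum>v\<in>U. (\<Sum>p\<in>P. \<mu> p * bary_coord U p v) *\<^sub>R v)
      = (\<Sum>p\<in>P. \<mu> p *\<^sub>R (\<Sum>v\<in>U. bary_coord U p v *\<^sub>R v))" .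
  then show "(\<Sum>v\<in>U. (\<Sum>p\<in>P. \<mu> p * bary_coord U p v) *\<^sub>R v) = (\<Sum>p\<in>P. \<mu> p *\<^sub>R p)"
    using coords(2) by simp
qed


definition affine_interp :: "('a::real_vector \<Rightarrow> real) \<Rightarrow> 'a set \<Rightarrow> 'a \<Rightarrow> real" where
  "affine_interp h U p = (\<Sum>u\<in>U. bary_coord U p u * h u)"

lemma affine_interp_eq:
  fixes U :: "'a::real_vector set"
  assumes "\<not> affine_dependent U" "finite U" "sum \<alpha> U = 1" "(\<Sum>u\<in>U. \<alpha> u *\<^sub>R u) = z"
  shows "affine_interp h U z = (\<Sum>u\<in>U. \<alpha> u * h u)"
  unfolding affine_interp_def by (rule sum.cong) (auto simp: bary_coord_unique[OF assms])

lemma affine_interp_vertex: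
  fixes U :: "'a::real_vector set"
  assumes "\<not> affine_dependent U" "finite U" "v \<in> U"
  shows "affine_interp h U v = h v"
proof -
  have "(\<Sum>u\<in>U. (if u = v then 1 else 0) *\<^sub>R u) = (\<Sum>u\<in>U. if u = v then v else 0)"
    by (rule sum.cong) auto
  then have "(\<Sum>u\<in>U. (if u = v then 1 else 0) *\<^sub>R u) = v"
    using assms(2,3) by (simp add: sum.delta')
  then have "affine_interp h U v = (\<Sum>u\<in>U. (if u = v then 1 else 0) * h u)"
    using affine_interp_eq[OF assms(1,2)] assms(2,3) by (simp add: sum.delta')
  also have "\<dots> = (\<Sum>u\<in>U. if u = v then h v else 0)"
    by (rule sum.cong) auto
  finally show ?thesis using assms(2,3) by (simp add: sum.delta')
qed

lemma affine_interp_affine_combination: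
  fixes U :: "'a::real_vector set"
  assumes "\<not> affine_dependent U" "finite U" "finite P" "sum \<mu> P = 1" "P \<subseteq> affine hull U"
  shows "affine_interp h U (\<Sum>p\<in>P. \<mu> p *\<^sub>R p) = (\<Sum>p\<in>P. \<mu> p * affine_interp h U p)"
proof -
  have "affine_interp h U (\<Sum>p\<in>P. \<mu> p *\<^sub>R p) = (\<Sum>u\<in>U. (\<Sum>p\<in>P. \<mu> p * bary_coord U p u) * h u)"
    unfolding affine_interp_def
    by (rule sum.cong) (auto simp: bary_coord_affine_combination[OF assms])
  also have "\<dots> = (\<Sum>u\<in>U. \<Sum>p\<in>P. \<mu> p * (bary_coord U p u * h u))"
    by (simp add: sum_distrib_right mult.assoc)
  also have "\<dots> = (\<Sum>p\<in>P. \<mu> p * affine_interp h U p)"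
    unfolding affine_interp_def by (subst sum.swap) (simp add: sum_distrib_left)
  finally show ?thesis .
qed

lemma sum_affine_interp_gap:
  fixes W :: "'a::real_vector set"
  assumes "\<not> affine_dependent W" "finite W" "finite P" "sum \<mu> P = 1" "P \<subseteq> affine hull W"
  shows "(\<Sum>p\<in>P. \<mu> p * (h p - affine_interp h W p))
       = (\<Sum>p\<in>P. \<mu> p * h p) - affine_interp h W (\<Sum>p\<in>P. \<mu> p *\<^sub>R p)"
  using affine_interp_affine_combination[OF assms, of h]
  by (simp add: right_diff_distrib sum_subtractf)

lemma affine_interp_add_scaled:
  "affine_interp (\<lambda>q. g q + s * f q) U p = affine_interp g U p + s * affine_interp f U p"
  unfolding affine_interp_def by (simp add: distrib_left sum.distrib sum_distrib_left mult.left_commute)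

lemma sum_affine_functional:
  fixes q :: "'i \<Rightarrow> 'a::real_inner"
  assumes "sum \<mu> I = 1"
  shows "(\<Sum>i\<in>I. \<mu> i * (c \<bullet> q i + K)) = c \<bullet> (\<Sum>i\<in>I. \<mu> i *\<^sub>R q i) + K"
  using assms by (simp add: distrib_left sum.distrib inner_sum_right sum_distrib_right[symmetric])

lemma norm_sq_sub_power_of_point:
  fixes c p :: "'a::real_inner"
  shows "(norm p)\<^sup>2 - ((dist c p)\<^sup>2 - r\<^sup>2) = (2 *\<^sub>R c) \<bullet> p + (r\<^sup>2 - c \<bullet> c)"
  by (simp add: dist_norm power2_norm_eq_inner inner_diff_left inner_diff_right inner_commute
      algebra_simps)

lemma affine_interp_norm_sq_cospherical:
  fixes V :: "'a::real_inner set"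
  assumes "finite V" "\<forall>v\<in>V. dist c v = r" "q \<in> affine hull V"
  shows "affine_interp (\<lambda>p. (norm p)\<^sup>2) V q = (norm q)\<^sup>2 - ((dist c q)\<^sup>2 - r\<^sup>2)"
proof -
  note coords = bary_coord_represents[OF assms(1,3)]
  have "affine_interp (\<lambda>p. (norm p)\<^sup>2) V q
      = (\<Sum>v\<in>V. bary_coord V q v * ((2 *\<^sub>R c) \<bullet> v + (r\<^sup>2 - c \<bullet> c)))"
  proof (unfold affine_interp_def, intro sum.cong refl)
    fix v assume "v \<in> V"
    then have "(norm v)\<^sup>2 = (2 *\<^sub>R c) \<bullet> v + (r\<^sup>2 - c \<bullet> c)"
      using norm_sq_sub_power_of_point[of v c r] assms(2) by simp
    then show "bary_coord V q v * (norm v)\<^sup>2 = bary_coord V q v * ((2 *\<^sub>R c) \<bullet> v + (r\<^sup>2 - c \<bullet> c))"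
      by simp
  qed
  also have "\<dots> = (2 *\<^sub>R c) \<bullet> q + (r\<^sup>2 - c \<bullet> c)"
    using sum_affine_functional[OF coords(1), of "2 *\<^sub>R c" "\<lambda>v. v"] coords(2) by simp
  finally show ?thesis by (simp add: norm_sq_sub_power_of_point)
qed

lemma is_cellD:
  fixes A :: "'a::euclidean_space set"
  assumes "finite A" "is_cell A U"
  shows "finite U" "\<not> affine_dependent U" "U \<subseteq> A" "aff_dim U = aff_dim A"
    "affine hull U = affine hull A" "A \<subseteq> affine hull U"
proof -
  show U: "U \<subseteq> A" "\<not> affine_dependent U" using assms(2) unfolding is_cell_def by simp_all
  show "finite U" using finite_subset[OF U(1) assms(1)] .
  show dim: "aff_dim U = aff_dim A"
    using assms(2) aff_dim_affine_independent[OF U(2)] unfolding is_cell_def by linarith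
  show hull: "affine hull U = affine hull A" using aff_dim_eq_full_gen[OF U(1)] dim by simp
  show "A \<subseteq> affine hull U" unfolding hull by (rule hull_subset)
qed

lemma cell_nonempty:
  fixes A :: "'a::euclidean_space set"
  assumes "A \<noteq> {}" "is_cell A U"
  shows "U \<noteq> {}"
proof -
  have "0 \<le> aff_dim A" using assms(1) aff_dim_geq[of A] aff_dim_empty[of A] by linarith
  then show ?thesis using assms(2) unfolding is_cell_def by auto
qed

lemma finite_cells:
  fixes A :: "'a::euclidean_space set"
  assumes "finite A"
  shows "finite {U. is_cell A U}"
  using assms by (rule finite_subset[rotated, OF finite_Pow_iff[THEN iffD2]]) (auto simp: is_cell_def)

section \<open>Pivoting\<close>

lemma sum_exchange_weights:
  fixes f :: "'a \<Rightarrow> 'b::real_vector"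
  assumes "finite U" "p \<notin> U"
  shows "(\<Sum>v\<in>insert p U. (if v = p then t else \<alpha> v - t * b v) *\<^sub>R f v)
       = (\<Sum>v\<in>U. \<alpha> v *\<^sub>R f v) + t *\<^sub>R (f p - (\<Sum>v\<in>U. b v *\<^sub>R f v))"
proof -
  have "(\<Sum>v\<in>U. (if v = p then t else \<alpha> v - t * b v) *\<^sub>R f v)
      = (\<Sum>v\<in>U. \<alpha> v *\<^sub>R f v - t *\<^sub>R (b v *\<^sub>R f v))"
    using assms(2) by (intro sum.cong) (auto simp: scaleR_diff_left)
  then show ?thesis
    using assms by (simp add: sum_subtractf scaleR_sum_right scaleR_diff_right)
qed

lemma affine_hull_exchange:
  fixes U :: "'a::real_vector set"
  assumes "finite U" "p \<notin> U" "u \<in> U" "sum b U = 1" "(\<Sum>v\<in>U. b v *\<^sub>R v) = p" "b u \<noteq> 0"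
  shows "u \<in> affine hull (insert p (U - {u}))"
proof -
  define w where "w v = (if v = p then 1 / b u else (if v = u then 1 else 0) - 1 / b u * b v)"
    for v
  have delta: "(\<Sum>v\<in>U. (if v = u then 1 else 0) *\<^sub>R f v) = f u" for f :: "'a \<Rightarrow> 'b::real_vector"
  proof -
    have "(\<Sum>v\<in>U. (if v = u then 1 else 0) *\<^sub>R f v) = (\<Sum>v\<in>U. if v = u then f u else 0)"
      by (rule sum.cong) auto
    then show ?thesis using assms(1,3) by (simp add: sum.delta')
  qed
  have exch: "(\<Sum>v\<in>insert p (U - {u}). w v *\<^sub>R f v)
      = f u + (1 / b u) *\<^sub>R (f p - (\<Sum>v\<in>U. b v *\<^sub>R f v))"
    for f :: "'a \<Rightarrow> 'b::real_vector"
  proof -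
    have "(\<Sum>v\<in>insert p (U - {u}). w v *\<^sub>R f v) = (\<Sum>v\<in>insert p U. w v *\<^sub>R f v)"
      using assms(1-3,6) unfolding w_def by (intro sum.mono_neutral_left) auto
    also have "\<dots> = (\<Sum>v\<in>U. (if v = u then 1 else 0) *\<^sub>R f v)
        + (1 / b u) *\<^sub>R (f p - (\<Sum>v\<in>U. b v *\<^sub>R f v))"
      unfolding w_def by (rule sum_exchange_weights[OF assms(1,2)])
    finally show ?thesis by (simp add: delta)
  qed
  have "sum w (insert p (U - {u})) = 1" "(\<Sum>v\<in>insert p (U - {u}). w v *\<^sub>R v) = u"
    using exch[of "\<lambda>_. 1::real"] exch[of "\<lambda>v. v"] assms(4,5) by simp_all
  then show ?thesis
    unfolding affine_hull_finite[OF finite.insertI[OF finite_Diff[OF assms(1)]]] by blast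
qed

lemma cell_exchange:
  fixes A :: "'a::euclidean_space set"
  assumes "finite A" "is_cell A U" "p \<in> A" "p \<notin> U" "u \<in> U" "bary_coord U p u \<noteq> 0"
  shows "is_cell A (insert p (U - {u}))"
proof -
  note U = is_cellD[OF assms(1,2)]
  define U' where "U' = insert p (U - {u})"
  have coords: "sum (bary_coord U p) U = 1" "(\<Sum>v\<in>U. bary_coord U p v *\<^sub>R v) = p"
    using bary_coord_represents[OF U(1)] U(6) assms(3) by auto
  have "u \<in> affine hull U'"
    unfolding U'_def by (rule affine_hull_exchange[OF U(1) assms(4,5) coords assms(6)])
  then have "U \<subseteq> affine hull U'"
    unfolding U'_def by (auto intro: hull_inc)
  from aff_dim_subset[OF this] have "aff_dim A \<le> aff_dim U'"
    using U(4) by simp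
  moreover have "aff_dim U' \<le> aff_dim A"
    using U(3) assms(3) unfolding U'_def by (intro aff_dim_subset) auto
  moreover have "card U' = card U"
  proof -
    have "card U > 0" using U(1) assms(5) card_gt_0_iff by blast
    then show ?thesis using U(1) assms(4,5) unfolding U'_def by (simp add: card.insert_remove)
  qed
  ultimately show ?thesis
    using assms(2) U(1) U(3) assms(3)
    unfolding is_cell_def U'_def affine_independent_iff_card by auto
qed

lemma ratio_test:
  fixes \<alpha> b :: "'a \<Rightarrow> real"
  assumes "finite U" "sum b U = 1" "\<And>v. v \<in> U \<Longrightarrow> 0 < \<alpha> v"
  obtains u t where "u \<in> U" "0 < b u" "0 < t" "t * b u = \<alpha> u" "\<And>v. v \<in> U \<Longrightarrow> t * b v \<le> \<alpha> v"
proof -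
  define P where "P = {v\<in>U. 0 < b v}"
  have "P \<noteq> {}"
  proof
    assume "P = {}"
    then have "sum b U \<le> 0" unfolding P_def by (intro sum_nonpos) auto
    with assms(2) show False by simp
  qed
  moreover have "finite P" unfolding P_def using assms(1) by simp
  ultimately obtain u where u: "u \<in> U" "0 < b u" and min: "\<forall>v\<in>P. \<alpha> u / b u \<le> \<alpha> v / b v"
    using arg_min_if_finite[of P "\<lambda>v. \<alpha> v / b v"] unfolding P_def by (metis (lifting) mem_Collect_eq not_le)
  define t where "t = \<alpha> u / b u"
  have "0 < t" unfolding t_def using assms(3)[OF u(1)] u(2) by simp
  have "t * b v \<le> \<alpha> v" if "v \<in> U" for v
  proof (cases "0 < b v")
    case True
    then show ?thesis using min that unfolding P_def t_def by (simp add: le_divide_eq)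
  next
    case False
    then show ?thesis using mult_nonneg_nonpos[of t "b v"] \<open>0 < t\<close> assms(3)[OF that] by linarith
  qed
  moreover have "t * b u = \<alpha> u" unfolding t_def using u(2) by simp
  ultimately show ?thesis using that u \<open>0 < t\<close> by blast
qed

lemma pivot_step:
  fixes A :: "'a::euclidean_space set"
  assumes "finite A" "is_cell A U" "p \<in> A" "p \<notin> U" "z \<in> convex hull U"
    and pos: "\<And>u. u \<in> U \<Longrightarrow> 0 < bary_coord U z u"
  obtains U' t where "is_cell A U'" "z \<in> convex hull U'" "0 < t"
    "affine_interp h U' z = affine_interp h U z + t * (h p - affine_interp h U p)"
proof -
  note U = is_cellD[OF assms(1,2)]
  define b where "b = bary_coord U p"
  define \<alpha> where "\<alpha> = bary_coord U z"
  have b: "sum b U = 1" "(\<Sum>v\<in>U. b v *\<^sub>R v) = p"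
    using bary_coord_represents[OF U(1)] U(6) assms(3) unfolding b_def by auto
  have \<alpha>: "sum \<alpha> U = 1" "(\<Sum>v\<in>U. \<alpha> v *\<^sub>R v) = z"
    using bary_coord_represents[OF U(1)] assms(5) hull_subset convex_hull_subset_affine_hull
    unfolding \<alpha>_def by blast+
  obtain u t where u: "u \<in> U" "0 < b u" and t: "0 < t" "t * b u = \<alpha> u"
    and below: "\<And>v. v \<in> U \<Longrightarrow> t * b v \<le> \<alpha> v"
    using ratio_test[OF U(1) b(1), of \<alpha>] pos unfolding \<alpha>_def by blast
  define w where "w v = (if v = p then t else \<alpha> v - t * b v)" for v
  define U' where "U' = insert p (U - {u})"
  have w_nonneg: "0 \<le> w v" if "v \<in> U'" for v
    using that t(1) below[of v] unfolding U'_def w_def by auto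
  have cell: "is_cell A U'"
    unfolding U'_def using cell_exchange[OF assms(1-4) u(1)] u(2) unfolding b_def by simp
  have exch: "(\<Sum>v\<in>U'. w v *\<^sub>R f v)
      = (\<Sum>v\<in>U. \<alpha> v *\<^sub>R f v) + t *\<^sub>R (f p - (\<Sum>v\<in>U. b v *\<^sub>R f v))"
    for f :: "'a \<Rightarrow> 'b::real_vector"
  proof -
    have "(\<Sum>v\<in>U'. w v *\<^sub>R f v) = (\<Sum>v\<in>insert p U. w v *\<^sub>R f v)"
      using assms(4) u(1) t(2) U(1) unfolding U'_def w_def by (intro sum.mono_neutral_left) auto
    then show ?thesis unfolding w_def by (simp add: sum_exchange_weights[OF U(1) assms(4)])
  qed
  have "sum w U' = 1" "(\<Sum>v\<in>U'. w v *\<^sub>R v) = z"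
    using exch[of "\<lambda>_. 1::real"] exch[of "\<lambda>v. v"] \<alpha> b by simp_all
  moreover have "finite U'" unfolding U'_def using U(1) by simp
  ultimately have "z \<in> convex hull U'" "affine_interp h U' z = (\<Sum>v\<in>U'. w v * h v)"
    using w_nonneg affine_interp_eq[OF is_cellD(2)[OF assms(1) cell]]
    by (auto simp: convex_hull_finite)
  moreover have "(\<Sum>v\<in>U'. w v * h v) = affine_interp h U z + t * (h p - affine_interp h U p)"
    using exch[of h] affine_interp_eq[OF U(2,1) \<alpha>, of h]
    unfolding affine_interp_def b_def by (simp add: mult.commute)
  ultimately show ?thesis using that cell t(1) by simp
qed

section \<open>Regular triangulations\<close>

lemma affine_line_subset:
  fixes z d :: "'a::real_vector"
  assumes "affine C" "z + s1 *\<^sub>R d \<in> C" "z + s2 *\<^sub>R d \<in> C" "s1 \<noteq> s2"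
  shows "z + s *\<^sub>R d \<in> C"
proof -
  define l where "l = (s - s1) / (s2 - s1)"
  have "l * (s2 - s1) = s - s1" using assms(4) unfolding l_def by simp
  then have "(1 - l) * s1 + l * s2 = s" by (simp add: algebra_simps)
  moreover have "(1 - l) *\<^sub>R (z + s1 *\<^sub>R d) + l *\<^sub>R (z + s2 *\<^sub>R d) = z + ((1 - l) * s1 + l * s2) *\<^sub>R d"
    by (simp add: algebra_simps)
  ultimately show ?thesis using assms(1-3) unfolding affine_alt by metis
qed

lemma convex_avoids_lower_dim_affines:
  fixes S :: "'a::euclidean_space set"
  assumes "convex S" "S \<noteq> {}" "finite \<F>" "\<And>B. B \<in> \<F> \<Longrightarrow> affine B \<and> aff_dim B < aff_dim S"
  shows "\<exists>z\<in>S. \<forall>B\<in>\<F>. z \<notin> B"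
  using assms(3,4)
proof (induction \<F> rule: finite_induct)
  case empty
  then show ?case using assms(2) by auto
next
  case (insert B \<F>)
  then obtain z1 where z1: "z1 \<in> S" "\<forall>C\<in>\<F>. z1 \<notin> C" by auto
  have B: "affine B" "aff_dim B < aff_dim S" using insert.prems by auto
  obtain z2 where z2: "z2 \<in> S" "z2 \<notin> B"
    using aff_dim_subset[of S B] B(2) by force
  define w where "w s = z1 + s *\<^sub>R (z2 - z1)" for s
  have meets_once: "finite {s. w s \<in> C}" if C: "C \<in> insert B \<F>" for C
  proof -
    have unique: "s = s0" if "w s \<in> C" "w s0 \<in> C" for s s0
    proof (rule ccontr)
      assume "s \<noteq> s0"
      then have "w t \<in> C" for t
        using affine_line_subset[of C z1 s "z2 - z1" s0] C insert.prems that unfolding w_def by auto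
      then have "w 0 \<in> C" "w 1 \<in> C" by blast+
      then have "z1 \<in> C" "z2 \<in> C" unfolding w_def by simp_all
      then show False using C z1(2) z2(2) by auto
    qed
    show ?thesis
    proof (cases "\<exists>s0. w s0 \<in> C")
      case True
      then obtain s0 where "w s0 \<in> C" by blast
      then have "{s. w s \<in> C} \<subseteq> {s0}" using unique by blast
      then show ?thesis by (rule finite_subset) simp
    qed simp
  qed
  have "finite (\<Union>C\<in>insert B \<F>. {s. w s \<in> C})"
    using insert.hyps(1) meets_once by blast
  then obtain s :: real where s: "s \<in> {0<..1}" "s \<notin> (\<Union>C\<in>insert B \<F>. {s. w s \<in> C})"
    using Diff_infinite_finite[of _ "{0<..1::real}"] by (metis Diff_iff ex_in_conv finite.emptyI infinite_Ioc_iff zero_less_one)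
  have "w s = (1 - s) *\<^sub>R z1 + s *\<^sub>R z2" unfolding w_def by (simp add: algebra_simps)
  then have "w s \<in> S" using assms(1) z1(1) z2(1) s(1) unfolding convex_alt by auto
  then show ?case using s(2) by blast
qed

lemma bary_coord_pos_at_avoiding_point:
  fixes A :: "'a::euclidean_space set"
  assumes "finite A" "is_cell A U" "z \<in> convex hull U" "u \<in> U"
    and avoid: "\<And>B. B \<subseteq> A \<Longrightarrow> aff_dim B < aff_dim A \<Longrightarrow> z \<notin> affine hull B"
  shows "0 < bary_coord U z u"
proof (rule ccontr)
  note U = is_cellD[OF assms(1,2)]
  define \<alpha> where "\<alpha> = bary_coord U z"
  assume "\<not> 0 < bary_coord U z u"
  then have "\<alpha> u = 0" using bary_coord_nonneg[OF U(2,1) assms(3,4)] unfolding \<alpha>_def by simp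
  moreover have "sum \<alpha> U = 1" "(\<Sum>v\<in>U. \<alpha> v *\<^sub>R v) = z"
    using bary_coord_represents[OF U(1)] assms(3) convex_hull_subset_affine_hull
    unfolding \<alpha>_def by blast+
  ultimately have "sum \<alpha> (U - {u}) = 1" "(\<Sum>v\<in>U - {u}. \<alpha> v *\<^sub>R v) = z"
    using U(1) assms(4) by (simp_all add: sum_diff1)
  then have "z \<in> affine hull (U - {u})"
    unfolding affine_hull_finite[OF finite_Diff[OF U(1)]] by blast
  moreover have "aff_dim (U - {u}) < aff_dim A"
  proof -
    have "\<not> affine_dependent (U - {u})" using affine_independent_subset[OF U(2)] by auto
    then have "aff_dim (U - {u}) = int (card U - 1) - 1"
      using aff_dim_affine_independent[of "U - {u}"] assms(4) by simp
    moreover have "card U > 0" using U(1) assms(4) card_gt_0_iff by blast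
    ultimately show ?thesis using aff_dim_affine_independent[OF U(2)] U(4) by linarith
  qed
  ultimately show False using avoid U(3) by blast
qed

text \<open>\<open>U\<close> is a cell of the regular subdivision induced by the heights \<open>h\<close>: no lifted
  point \<open>(p, h p)\<close> lies below the hyperplane through the lifted vertices of \<open>U\<close>.\<close>

definition lower_cell :: "('a::euclidean_space \<Rightarrow> real) \<Rightarrow> 'a set \<Rightarrow> 'a set \<Rightarrow> bool" where
  "lower_cell h A U \<longleftrightarrow> is_cell A U \<and> (\<forall>p\<in>A. affine_interp h U p \<le> h p)"

definition generic_lifting :: "('a::euclidean_space \<Rightarrow> real) \<Rightarrow> 'a set \<Rightarrow> bool" where
  "generic_lifting h A \<longleftrightarrow> (\<forall>U. is_cell A U \<longrightarrow> (\<forall>p\<in>A - U. affine_interp h U p \<noteq> h p))"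

text \<open>Minimise the interpolated height at \<open>z\<close> over all cells containing \<open>z\<close>; a cell
  violated at some \<open>p\<close> could be pivoted to a cell of smaller height at \<open>z\<close>.\<close>

lemma lower_cell_at_avoiding_point:
  fixes A :: "'a::euclidean_space set"
  assumes "finite A" "is_cell A U0" "z \<in> convex hull U0"
    and avoid: "\<And>B. B \<subseteq> A \<Longrightarrow> aff_dim B < aff_dim A \<Longrightarrow> z \<notin> affine hull B"
  obtains U where "lower_cell h A U" "z \<in> convex hull U"
proof -
  define C where "C = {U. is_cell A U \<and> z \<in> convex hull U}"
  have "finite C" unfolding C_def using finite_cells[OF assms(1)] by (rule finite_subset[rotated]) auto
  moreover have "U0 \<in> C" unfolding C_def using assms(2,3) by simp
  ultimately obtain U where U: "U \<in> C" and min: "\<And>U'. U' \<in> C \<Longrightarrow> affine_interp h U z \<le> affine_interp h U' z"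
    using arg_min_if_finite[of C "\<lambda>U. affine_interp h U z"] by (metis empty_iff not_le)
  have cell: "is_cell A U" and z: "z \<in> convex hull U" using U unfolding C_def by auto
  have "lower_cell h A U"
    unfolding lower_cell_def
  proof (intro conjI cell ballI leI notI)
    fix p assume p: "p \<in> A" "h p < affine_interp h U p"
    have "p \<notin> U" using affine_interp_vertex[OF is_cellD(2,1)[OF assms(1) cell], of _ h] p(2) by auto
    then obtain U' t where "is_cell A U'" "z \<in> convex hull U'" "0 < t"
        "affine_interp h U' z = affine_interp h U z + t * (h p - affine_interp h U p)"
      using pivot_step[OF assms(1) cell p(1) _ z bary_coord_pos_at_avoiding_point[OF assms(1) cell z _ avoid]]
      by blast
    moreover have "t * (h p - affine_interp h U p) < 0" using \<open>0 < t\<close> p(2) by (simp add: mult_pos_neg)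
    ultimately show False using min[of U'] unfolding C_def by simp
  qed
  then show ?thesis using that z by blast
qed

text \<open>Points of \<open>convex hull A\<close> outside all lower-dimensional affine hulls of subsets of
  \<open>A\<close> are dense, each of them lies in a lower cell, and the finitely many lower cells
  have closed union.\<close>

lemma convex_hull_subset_lower_cells:
  fixes A :: "'a::euclidean_space set"
  assumes "finite A" and cover: "\<And>z. z \<in> convex hull A \<Longrightarrow> \<exists>U. is_cell A U \<and> z \<in> convex hull U"
  shows "convex hull A \<subseteq> \<Union>((hull) convex ` {U. lower_cell h A U})"
proof
  fix z assume z: "z \<in> convex hull A"
  define X where "X = \<Union>((hull) convex ` {U. lower_cell h A U})"
  have "finite {U. lower_cell h A U}"
    using finite_cells[OF assms(1)] by (rule finite_subset[rotated]) (auto simp: lower_cell_def)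
  moreover have "closed (convex hull U)" if "lower_cell h A U" for U
    using that is_cellD(1)[OF assms(1)]
    by (simp add: lower_cell_def compact_imp_closed compact_convex_hull finite_imp_compact)
  ultimately have "closed X" unfolding X_def by blast
  moreover have "z \<in> closure X"
    unfolding closure_approachable
  proof (intro allI impI)
    fix e :: real assume "0 < e"
    define S where "S = convex hull A \<inter> ball z e"
    have "S \<noteq> {}" "convex S" unfolding S_def using z \<open>0 < e\<close> by (auto simp: convex_Int)
    moreover have "aff_dim S = aff_dim A"
      using aff_dim_convex_Int_open[of "convex hull A" "ball z e"] \<open>S \<noteq> {}\<close>
      unfolding S_def by (simp add: aff_dim_convex_hull)
    ultimately have "\<exists>z'\<in>S. \<forall>B\<in>(hull) affine ` {B. B \<subseteq> A \<and> aff_dim B < aff_dim A}. z' \<notin> B"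
      using assms(1) by (intro convex_avoids_lower_dim_affines) auto
    then obtain z' where z': "z' \<in> S"
      and avoid: "\<And>B. B \<subseteq> A \<Longrightarrow> aff_dim B < aff_dim A \<Longrightarrow> z' \<notin> affine hull B"
      by blast
    obtain U0 where "is_cell A U0" "z' \<in> convex hull U0" using cover z' unfolding S_def by blast
    then obtain U where "lower_cell h A U" "z' \<in> convex hull U"
      using lower_cell_at_avoiding_point[OF assms(1) _ _ avoid] by blast
    then show "\<exists>y\<in>X. dist y z < e"
      using z' unfolding X_def S_def by (auto simp: dist_commute)
  qed
  ultimately show "z \<in> X" by (simp add: closure_closed)
qed

lemma lower_cells_support:
  fixes A :: "'a::euclidean_space set"
  assumes "finite A" "generic_lifting h A" "lower_cell h A U" "lower_cell h A W"
    and z: "z \<in> convex hull U" "z \<in> convex hull W" and "u \<in> U" "bary_coord U z u \<noteq> 0"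
  shows "u \<in> W"
proof (rule ccontr)
  assume "u \<notin> W"
  have cells: "is_cell A U" "is_cell A W" using assms(3,4) unfolding lower_cell_def by auto
  note U = is_cellD[OF assms(1) cells(1)] and W = is_cellD[OF assms(1) cells(2)]
  define \<alpha> where "\<alpha> = bary_coord U z"
  define \<beta> where "\<beta> = bary_coord W z"
  have \<alpha>: "sum \<alpha> U = 1" "(\<Sum>u\<in>U. \<alpha> u *\<^sub>R u) = z" "\<And>u. u \<in> U \<Longrightarrow> 0 \<le> \<alpha> u"
    using bary_coord_represents[OF U(1)] bary_coord_nonneg[OF U(2,1)] z(1)
      convex_hull_subset_affine_hull unfolding \<alpha>_def by blast+
  have \<beta>: "sum \<beta> W = 1" "(\<Sum>u\<in>W. \<beta> u *\<^sub>R u) = z" "\<And>u. u \<in> W \<Longrightarrow> 0 \<le> \<beta> u"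
    using bary_coord_represents[OF W(1)] bary_coord_nonneg[OF W(2,1)] z(2)
      convex_hull_subset_affine_hull unfolding \<beta>_def by blast+
  have gap_U: "(\<Sum>u\<in>U. \<alpha> u * (h u - affine_interp h W u)) = affine_interp h U z - affine_interp h W z"
    using sum_affine_interp_gap[OF W(2,1) U(1) \<alpha>(1)] affine_interp_eq[OF U(2,1) \<alpha>(1,2)]
      \<alpha>(2) U(3) W(6) by auto
  have gap_W: "(\<Sum>u\<in>W. \<beta> u * (h u - affine_interp h U u)) = affine_interp h W z - affine_interp h U z"
    using sum_affine_interp_gap[OF U(2,1) W(1) \<beta>(1)] affine_interp_eq[OF W(2,1) \<beta>(1,2)]
      \<beta>(2) W(3) U(6) by auto
  have terms_U: "0 \<le> \<alpha> u * (h u - affine_interp h W u)" if "u \<in> U" for u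
    using \<alpha>(3)[OF that] assms(4) U(3) that unfolding lower_cell_def by auto
  have terms_W: "0 \<le> \<beta> u * (h u - affine_interp h U u)" if "u \<in> W" for u
    using \<beta>(3)[OF that] assms(3) W(3) that unfolding lower_cell_def by auto
  have "0 \<le> (\<Sum>u\<in>U. \<alpha> u * (h u - affine_interp h W u))"
    "0 \<le> (\<Sum>u\<in>W. \<beta> u * (h u - affine_interp h U u))"
    by (rule sum_nonneg, erule terms_U, rule sum_nonneg, erule terms_W)
  then have "(\<Sum>u\<in>U. \<alpha> u * (h u - affine_interp h W u)) = 0"
    using gap_U gap_W by linarith
  then have "\<forall>u\<in>U. \<alpha> u * (h u - affine_interp h W u) = 0"
    by (subst (asm) sum_nonneg_eq_0_iff[OF U(1)]) (use terms_U in auto)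
  moreover have "affine_interp h W u \<noteq> h u"
    using assms(2) cells(2) U(3) \<open>u \<in> U\<close> \<open>u \<notin> W\<close> unfolding generic_lifting_def by blast
  ultimately show False using \<open>u \<in> U\<close> assms(8) unfolding \<alpha>_def by force
qed

lemma lower_cells_inter:
  fixes A :: "'a::euclidean_space set"
  assumes "finite A" "generic_lifting h A" "lower_cell h A U" "lower_cell h A W"
  shows "convex hull U \<inter> convex hull W = convex hull (U \<inter> W)"
proof
  show "convex hull (U \<inter> W) \<subseteq> convex hull U \<inter> convex hull W" by (simp add: hull_mono)
next
  have "is_cell A U" using assms(3) unfolding lower_cell_def by simp
  note U = is_cellD[OF assms(1) this]
  show "convex hull U \<inter> convex hull W \<subseteq> convex hull (U \<inter> W)"
  proof
    fix z assume z: "z \<in> convex hull U \<inter> convex hull W"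
    define \<alpha> where "\<alpha> = bary_coord U z"
    have \<alpha>: "sum \<alpha> U = 1" "(\<Sum>u\<in>U. \<alpha> u *\<^sub>R u) = z" "\<And>u. u \<in> U \<Longrightarrow> 0 \<le> \<alpha> u"
      using bary_coord_represents[OF U(1)] bary_coord_nonneg[OF U(2,1)] z
        convex_hull_subset_affine_hull unfolding \<alpha>_def by blast+
    have support: "u \<in> W" if "u \<in> U" "\<alpha> u \<noteq> 0" for u
      using lower_cells_support[OF assms] z that unfolding \<alpha>_def by blast
    have "sum \<alpha> (U \<inter> W) = sum \<alpha> U" "(\<Sum>u\<in>U \<inter> W. \<alpha> u *\<^sub>R u) = (\<Sum>u\<in>U. \<alpha> u *\<^sub>R u)"
      by (rule sum.mono_neutral_left; use U(1) support in auto)+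
    then show "z \<in> convex hull (U \<inter> W)"
      unfolding convex_hull_finite[OF finite_Int[OF disjI1[OF U(1)]]] using \<alpha> by auto
  qed
qed

lemma lower_cells_triangulation:
  fixes A :: "'a::euclidean_space set"
  assumes "finite A" "generic_lifting h A" "is_triangulation A T"
  shows "is_triangulation A {U. lower_cell h A U}"
proof -
  have "\<exists>U. is_cell A U \<and> z \<in> convex hull U" if "z \<in> convex hull A" for z
    using assms(3) that unfolding is_triangulation_def by blast
  then have "convex hull A \<subseteq> \<Union>((hull) convex ` {U. lower_cell h A U})"
    by (rule convex_hull_subset_lower_cells[OF assms(1)])
  moreover have "convex hull U \<subseteq> convex hull A" if "lower_cell h A U" for U
    using that by (intro hull_mono) (simp add: lower_cell_def is_cell_def)
  ultimately have "\<Union>((hull) convex ` {U. lower_cell h A U}) = convex hull A" by blast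
  moreover have "\<forall>U\<in>{U. lower_cell h A U}. is_cell A U" by (simp add: lower_cell_def)
  moreover have "\<forall>U\<in>{U. lower_cell h A U}. \<forall>W\<in>{U. lower_cell h A U}.
      convex hull U \<inter> convex hull W = convex hull (U \<inter> W)"
    using lower_cells_inter[OF assms(1,2)] by simp
  ultimately show ?thesis unfolding is_triangulation_def by (intro conjI)
qed

lemma lower_norm_sq_cell_on_sphere:
  fixes A :: "'a::euclidean_space set"
  assumes "finite A" and lower: "lower_cell (\<lambda>p. (norm p)\<^sup>2) A U" and "is_cell A V"
    and sphere: "\<forall>v\<in>V. dist c v = r" and outside: "\<forall>p\<in>A. r \<le> dist c p"
    and \<alpha>: "sum \<alpha> U = 1" "\<And>u. u \<in> U \<Longrightarrow> 0 < \<alpha> u" "(\<Sum>u\<in>U. \<alpha> u *\<^sub>R u) \<in> convex hull V"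
    and "u \<in> U"
  shows "dist c u = r"
proof -
  define N where "N p = (norm p)\<^sup>2" for p :: 'a
  define z where "z = (\<Sum>u\<in>U. \<alpha> u *\<^sub>R u)"
  define g where "g p = (dist c p)\<^sup>2 - r\<^sup>2" for p
  define \<beta> where "\<beta> = bary_coord V z"
  have "is_cell A U" using lower unfolding lower_cell_def by simp
  note U = is_cellD[OF assms(1) this] and V = is_cellD[OF assms(1,3)]
  have \<beta>: "sum \<beta> V = 1" "(\<Sum>v\<in>V. \<beta> v *\<^sub>R v) = z" "\<And>v. v \<in> V \<Longrightarrow> 0 \<le> \<beta> v"
    using bary_coord_represents[OF V(1)] bary_coord_nonneg[OF V(2,1)] \<alpha>(3)
      convex_hull_subset_affine_hull unfolding \<beta>_def z_def by blast+
  have "V \<noteq> {}" using \<beta>(1) by auto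
  then have "0 \<le> r" using sphere by force
  then have g_nonneg: "0 \<le> g p" if "p \<in> A" for p
    using outside that unfolding g_def by (simp add: power_mono)
  have "(\<Sum>u\<in>U. \<alpha> u * (N u - g u)) = N z - g z"
    using sum_affine_functional[OF \<alpha>(1), of "2 *\<^sub>R c" "\<lambda>u. u" "r\<^sup>2 - c \<bullet> c"]
    unfolding N_def g_def z_def norm_sq_sub_power_of_point by simp
  then have gap_U: "(\<Sum>u\<in>U. \<alpha> u * g u) = affine_interp N U z - (N z - g z)"
    using affine_interp_eq[OF U(2,1) \<alpha>(1) z_def[symmetric], of N]
    by (simp add: right_diff_distrib sum_subtractf)
  have "(\<Sum>v\<in>V. \<beta> v * (N v - affine_interp N U v)) = affine_interp N V z - affine_interp N U z"
    using sum_affine_interp_gap[OF U(2,1) V(1) \<beta>(1)] affine_interp_eq[OF V(2,1) \<beta>(1,2)]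
      \<beta>(2) V(3) U(6) by auto
  also have "affine_interp N V z = N z - g z"
    using affine_interp_norm_sq_cospherical[OF V(1) sphere] \<alpha>(3)
      convex_hull_subset_affine_hull unfolding N_def g_def z_def by blast
  finally have gap_V: "(\<Sum>v\<in>V. \<beta> v * (N v - affine_interp N U v)) = N z - g z - affine_interp N U z" .
  have terms_U: "0 \<le> \<alpha> u * g u" if "u \<in> U" for u
    using \<alpha>(2)[OF that] g_nonneg U(3) that by auto
  have "0 \<le> (\<Sum>v\<in>V. \<beta> v * (N v - affine_interp N U v))"
    using \<beta>(3) lower V(3) unfolding lower_cell_def N_def by (intro sum_nonneg) auto
  moreover have "0 \<le> (\<Sum>u\<in>U. \<alpha> u * g u)" by (rule sum_nonneg) (rule terms_U)
  ultimately have "(\<Sum>u\<in>U. \<alpha> u * g u) = 0"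
    using gap_U gap_V by linarith
  then have "\<forall>u\<in>U. \<alpha> u * g u = 0"
    by (subst (asm) sum_nonneg_eq_0_iff[OF U(1)]) (use terms_U in auto)
  then have "g u = 0" using \<open>u \<in> U\<close> \<alpha>(2)[of u] by force
  then show ?thesis using \<open>0 \<le> r\<close> unfolding g_def by simp
qed

text \<open>The circumsphere of \<open>U\<close> is found as that of a Delaunay cell containing the
  barycentre of \<open>U\<close>.\<close>
lemma lower_norm_sq_cell_empty_circumsphere:
  fixes A :: "'a::euclidean_space set"
  assumes "finite A" "A \<noteq> {}" "is_delaunay_triangulation A T"
    and lower: "lower_cell (\<lambda>p. (norm p)\<^sup>2) A U"
  shows "empty_circumsphere A U"
proof -
  have cell: "is_cell A U" using lower unfolding lower_cell_def by simp
  note U = is_cellD[OF assms(1) cell]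
  define \<alpha> where "\<alpha> u = 1 / real (card U)" for u :: 'a
  define z where "z = (\<Sum>u\<in>U. \<alpha> u *\<^sub>R u)"
  have "card U > 0" using cell_nonempty[OF assms(2) cell] U(1) by (simp add: card_gt_0_iff)
  then have \<alpha>: "sum \<alpha> U = 1" "\<And>u. 0 < \<alpha> u" unfolding \<alpha>_def by simp_all
  then have "z \<in> convex hull U"
    unfolding z_def convex_hull_finite[OF U(1)] by (auto intro: less_imp_le)
  then have "z \<in> convex hull A" using hull_mono[OF U(3)] by blast
  then obtain V where "V \<in> T" "z \<in> convex hull V"
    using assms(3) unfolding is_delaunay_triangulation_def is_triangulation_def by blast
  then have V: "is_cell A V" "empty_circumsphere A V"
    using assms(3) unfolding is_delaunay_triangulation_def is_triangulation_def by auto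
  then obtain c r where c: "c \<in> affine hull V" and sphere: "\<forall>v\<in>V. dist c v = r"
    and outside: "\<forall>p\<in>A. r \<le> dist c p"
    unfolding empty_circumsphere_def by blast
  have "\<forall>u\<in>U. dist c u = r"
    using lower_norm_sq_cell_on_sphere[OF assms(1) lower V(1) sphere outside \<alpha>(1)] \<alpha>(2)
      \<open>z \<in> convex hull V\<close> unfolding z_def by blast
  moreover have "c \<in> affine hull U" using c U(5) is_cellD(5)[OF assms(1) V(1)] by simp
  ultimately show ?thesis unfolding empty_circumsphere_def using outside by blast
qed

lemma lower_cells_delaunay:
  fixes A :: "'a::euclidean_space set"
  assumes "finite A" "A \<noteq> {}" "generic_lifting h A" "is_delaunay_triangulation A T"
    and "\<And>U. lower_cell h A U \<Longrightarrow> lower_cell (\<lambda>p. (norm p)\<^sup>2) A U"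
  shows "is_delaunay_triangulation A {U. lower_cell h A U}"
proof -
  have "is_triangulation A T" using assms(4) unfolding is_delaunay_triangulation_def ..
  then show ?thesis
    unfolding is_delaunay_triangulation_def
    using lower_cells_triangulation[OF assms(1,3)] lower_norm_sq_cell_empty_circumsphere[OF assms(1,2,4)]
      assms(5) by simp
qed

section \<open>Generic perturbations of the lifting\<close>

text \<open>With heights \<open>t\<^bsup>\<sigma> q\<^esup>\<close> for distinct exponents \<open>\<sigma> q\<close>, the defect
  \<open>affine_interp f U p - f p\<close> is a polynomial in \<open>t\<close> whose coefficient of \<open>t\<^bsup>\<sigma> p\<^esup>\<close> is
  \<open>-1\<close>; so all but finitely many \<open>t\<close> work.\<close>

lemma generic_lifting_exists:
  fixes A :: "'a::euclidean_space set"
  assumes "finite A"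
  obtains f where "generic_lifting f A"
proof -
  obtain \<sigma> :: "'a \<Rightarrow> nat" where \<sigma>: "inj_on \<sigma> A"
    using finite_imp_inj_to_nat_seg[OF assms] by blast
  define pairs where "pairs = {(U, p). is_cell A U \<and> p \<in> A - U}"
  have "finite pairs"
    using finite_cells[OF assms] assms unfolding pairs_def
    by (rule finite_subset[rotated, OF finite_cartesian_product]) auto
  define P :: "'a set \<times> 'a \<Rightarrow> real poly" where
    "P = (\<lambda>(U, p). (\<Sum>u\<in>U. smult (bary_coord U p u) (monom 1 (\<sigma> u))) - monom 1 (\<sigma> p))"
  have nonzero: "P x \<noteq> 0" if "x \<in> pairs" for x
  proof -
    obtain U p where x: "x = (U, p)" "is_cell A U" "p \<in> A - U"
      using \<open>x \<in> pairs\<close> unfolding pairs_def by blast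
    have "\<sigma> u \<noteq> \<sigma> p" if "u \<in> U" for u
      using \<sigma> x that unfolding is_cell_def inj_on_def by blast
    then have "coeff (P x) (\<sigma> p) = -1"
      unfolding P_def x(1) by (simp add: coeff_sum coeff_monom)
    then show ?thesis by auto
  qed
  have "finite (\<Union>x\<in>pairs. {t. poly (P x) t = 0})"
    by (rule finite_UN_I[OF \<open>finite pairs\<close>]) (rule poly_roots_finite[OF nonzero])
  then obtain t :: real where "t \<notin> (\<Union>x\<in>pairs. {t. poly (P x) t = 0})"
    using ex_new_if_finite[OF infinite_UNIV_char_0] by blast
  then have t: "poly (P x) t \<noteq> 0" if "x \<in> pairs" for x
    using that by blast
  have "generic_lifting (\<lambda>q. t ^ \<sigma> q) A"
    unfolding generic_lifting_def
  proof (intro allI impI ballI)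
    fix U p assume "is_cell A U" "p \<in> A - U"
    then have "poly (P (U, p)) t \<noteq> 0" using t unfolding pairs_def by blast
    then show "affine_interp (\<lambda>q. t ^ \<sigma> q) U p \<noteq> t ^ \<sigma> p"
      unfolding P_def affine_interp_def by (simp add: poly_sum poly_monom)
  qed
  then show ?thesis by (rule that)
qed

lemma eventually_perturbed_sign:
  fixes c0 c1 :: real
  shows "\<forall>\<^sub>F s in at 0. (c1 \<noteq> 0 \<longrightarrow> c0 + s * c1 \<noteq> 0) \<and> (0 < c0 \<longrightarrow> 0 < c0 + s * c1)"
proof -
  have lim: "((\<lambda>s. c0 + s * c1) \<longlongrightarrow> c0) (at 0)"
    by (auto intro!: tendsto_eq_intros)
  have "\<forall>\<^sub>F s in at 0. c1 \<noteq> 0 \<longrightarrow> c0 + s * c1 \<noteq> 0"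
  proof (cases "c0 = 0")
    case True
    then show ?thesis by (auto simp: eventually_at_filter)
  next
    case False
    then show ?thesis using tendsto_imp_eventually_ne[OF lim False] by (auto elim: eventually_mono)
  qed
  moreover have "\<forall>\<^sub>F s in at 0. 0 < c0 \<longrightarrow> 0 < c0 + s * c1"
    using order_tendstoD(1)[OF lim] by (cases "0 < c0") auto
  ultimately show ?thesis by eventually_elim blast
qed

lemma eventually_generic_perturbation:
  fixes A :: "'a::euclidean_space set"
  assumes "finite A" "generic_lifting f A"
  shows "\<forall>\<^sub>F s in at (0::real). generic_lifting (\<lambda>q. g q + s * f q) A \<and>
           (\<forall>U. lower_cell (\<lambda>q. g q + s * f q) A U \<longrightarrow> lower_cell g A U)"
proof -
  define c0 where "c0 U p = affine_interp g U p - g p" for U p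
  define c1 where "c1 U p = affine_interp f U p - f p" for U p
  have gap: "affine_interp (\<lambda>q. g q + s * f q) U p - (g p + s * f p) = c0 U p + s * c1 U p"
    for s U p unfolding c0_def c1_def affine_interp_add_scaled by (simp add: algebra_simps)
  have "\<forall>\<^sub>F s in at 0. \<forall>(U, p) \<in> {U. is_cell A U} \<times> A.
      (c1 U p \<noteq> 0 \<longrightarrow> c0 U p + s * c1 U p \<noteq> 0) \<and> (0 < c0 U p \<longrightarrow> 0 < c0 U p + s * c1 U p)"
    using finite_cells[OF assms(1)] assms(1) eventually_perturbed_sign
    by (intro eventually_ball_finite) auto
  then show ?thesis
  proof eventually_elim
    case (elim s)
    have "generic_lifting (\<lambda>q. g q + s * f q) A"
      unfolding generic_lifting_def
    proof (intro allI impI ballI)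
      fix U p assume "is_cell A U" "p \<in> A - U"
      moreover have "c1 U p \<noteq> 0"
        using assms(2) calculation unfolding generic_lifting_def c1_def by auto
      ultimately show "affine_interp (\<lambda>q. g q + s * f q) U p \<noteq> g p + s * f p"
        using elim gap[of s U p] by auto
    qed
    moreover have "lower_cell g A U" if lower: "lower_cell (\<lambda>q. g q + s * f q) A U" for U
      unfolding lower_cell_def
    proof (intro conjI ballI)
      show "is_cell A U" using lower unfolding lower_cell_def by simp
      fix p assume "p \<in> A"
      then have "c0 U p + s * c1 U p \<le> 0" using lower gap[of s U p] unfolding lower_cell_def by auto
      then show "affine_interp g U p \<le> g p"
        using elim \<open>is_cell A U\<close> \<open>p \<in> A\<close> unfolding c0_def by force
    qed
    ultimately show ?case by blast
  qed
qed

lemma unique_delaunay_cospherical_vertex: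
  fixes A :: "'a::euclidean_space set"
  assumes "finite A" "is_delaunay_triangulation A T"
    and unique: "\<And>T'. is_delaunay_triangulation A T' \<Longrightarrow> T' = T"
    and "V \<in> T" "\<forall>v\<in>V. dist c v = r" "q \<in> A" "dist c q = r"
  shows "q \<in> V"
proof (rule ccontr)
  assume "q \<notin> V"
  define N where "N p = (norm p)\<^sup>2" for p :: 'a
  obtain f where "generic_lifting f A" using generic_lifting_exists[OF assms(1)] by blast
  from eventually_generic_perturbation[OF assms(1) this, of N]
  obtain d where "0 < d" and small: "\<And>s. s \<noteq> 0 \<Longrightarrow> \<bar>s\<bar> < d \<Longrightarrow>
      generic_lifting (\<lambda>q. N q + s * f q) A \<and>
      (\<forall>U. lower_cell (\<lambda>q. N q + s * f q) A U \<longrightarrow> lower_cell N A U)"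
    unfolding eventually_at dist_real_def diff_zero by blast
  have V_lower: "lower_cell (\<lambda>q. N q + s * f q) A V" if "s \<noteq> 0" "\<bar>s\<bar> < d" for s
  proof -
    have "A \<noteq> {}" using assms(6) by blast
    then have "is_delaunay_triangulation A {U. lower_cell (\<lambda>q. N q + s * f q) A U}"
      using lower_cells_delaunay[OF assms(1) _ _ assms(2)] small[OF that] unfolding N_def by presburger
    then show ?thesis using unique assms(4) by simp
  qed
  have V: "is_cell A V" using assms(2,4) unfolding is_delaunay_triangulation_def is_triangulation_def by blast
  have interp_N: "affine_interp N V q = N q"
    using affine_interp_norm_sq_cospherical[OF is_cellD(1)[OF assms(1) V] assms(5)]
      is_cellD(6)[OF assms(1) V] assms(6,7) unfolding N_def by auto
  define e where "e = d / 2"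
  have "0 < e" "e < d" unfolding e_def using \<open>0 < d\<close> by simp_all
  have "affine_interp N V q + s * affine_interp f V q \<le> N q + s * f q" if "s \<noteq> 0" "\<bar>s\<bar> < d" for s
    using V_lower[OF that] assms(6) unfolding lower_cell_def affine_interp_add_scaled by blast
  from this[of e] this[of "- e"] have "e * affine_interp f V q \<le> e * f q" "e * f q \<le> e * affine_interp f V q"
    using interp_N \<open>0 < e\<close> \<open>e < d\<close> by auto
  then have "affine_interp f V q = f q" using \<open>0 < e\<close> by simp
  moreover have "affine_interp (\<lambda>q. N q + e * f q) V q \<noteq> N q + e * f q"
  proof -
    have "generic_lifting (\<lambda>q. N q + e * f q) A" using small[of e] \<open>0 < e\<close> \<open>e < d\<close> by simp
    from this[unfolded generic_lifting_def, rule_format, OF V] show ?thesis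
      using assms(6) \<open>q \<notin> V\<close> by blast
  qed
  ultimately show False using interp_N unfolding affine_interp_add_scaled by simp
qed

section \<open>The least-squares barycentric problem\<close>

lemma objective_eq_weighted_sq_dist:
  fixes a :: "nat \<Rightarrow> 'a::euclidean_space"
  assumes "feasible_weights m a y x"
  shows "objective m a y x = (\<Sum>j=1..m. x j * (dist c (a j))\<^sup>2) - (dist c y)\<^sup>2"
proof -
  have y: "y = (\<Sum>j=1..m. x j *\<^sub>R a j)" and x: "(\<Sum>j=1..m. x j) = 1"
    using assms unfolding feasible_weights_def by auto
  have "(norm (y - p))\<^sup>2 = (dist c p)\<^sup>2 + ((2 *\<^sub>R (c - y)) \<bullet> p + (y \<bullet> y - c \<bullet> c))" for p
    by (simp add: dist_norm power2_norm_eq_inner inner_diff_left inner_diff_right inner_commute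
        algebra_simps)
  then have "objective m a y x
      = (\<Sum>j=1..m. x j * (dist c (a j))\<^sup>2) + (\<Sum>j=1..m. x j * ((2 *\<^sub>R (c - y)) \<bullet> a j + (y \<bullet> y - c \<bullet> c)))"
    unfolding objective_def by (simp add: distrib_left sum.distrib)
  also have "(\<Sum>j=1..m. x j * ((2 *\<^sub>R (c - y)) \<bullet> a j + (y \<bullet> y - c \<bullet> c)))
      = (2 *\<^sub>R (c - y)) \<bullet> y + (y \<bullet> y - c \<bullet> c)"
    using sum_affine_functional[OF x, of "2 *\<^sub>R (c - y)" a "y \<bullet> y - c \<bullet> c"] y by simp
  also have "\<dots> = - (dist c y)\<^sup>2"
    by (simp add: dist_norm power2_norm_eq_inner inner_diff_left inner_diff_right inner_commute
        algebra_simps)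
  finally show ?thesis by simp
qed

lemma feasible_weights_supported_on:
  fixes a :: "nat \<Rightarrow> 'a::euclidean_space"
  assumes "V \<subseteq> a ` {1..m}" "y \<in> convex hull V"
  obtains x where "feasible_weights m a y x" "\<And>j. j \<in> {1..m} \<Longrightarrow> x j \<noteq> 0 \<Longrightarrow> a j \<in> V"
proof -
  have "finite V" using assms(1) finite_surj by blast
  then obtain \<beta> where \<beta>: "\<forall>v\<in>V. 0 \<le> \<beta> v" "sum \<beta> V = 1" "(\<Sum>v\<in>V. \<beta> v *\<^sub>R v) = y"
    using assms(2) by (auto simp: convex_hull_finite)
  define idx where "idx = inv_into {1..m} a"
  define x where "x j = (if j \<in> idx ` V then \<beta> (a j) else 0)" for j
  have idx: "idx v \<in> {1..m}" "a (idx v) = v" if "v \<in> V" for v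
  proof -
    have "v \<in> a ` {1..m}" using assms(1) that by blast
    then show "idx v \<in> {1..m}" "a (idx v) = v"
      unfolding idx_def by (rule inv_into_into, rule f_inv_into_f)
  qed
  have "inj_on idx V" unfolding idx_def using assms(1) by (rule inj_on_inv_into)
  have sums: "(\<Sum>j=1..m. x j *\<^sub>R f (a j)) = (\<Sum>v\<in>V. \<beta> v *\<^sub>R f v)" for f :: "'a \<Rightarrow> 'b::real_vector"
  proof -
    have "(\<Sum>j=1..m. x j *\<^sub>R f (a j)) = (\<Sum>j\<in>idx ` V. \<beta> (a j) *\<^sub>R f (a j))"
      unfolding x_def using idx(1) by (intro sum.mono_neutral_cong_right) auto
    also have "\<dots> = (\<Sum>v\<in>V. \<beta> v *\<^sub>R f v)"
      using idx(2) by (simp add: sum.reindex[OF \<open>inj_on idx V\<close>])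
    finally show ?thesis .
  qed
  have "feasible_weights m a y x"
    unfolding feasible_weights_def
    using sums[of "\<lambda>_. 1::real"] sums[of "\<lambda>v. v"] \<beta> idx(2) by (auto simp: x_def)
  moreover have "a j \<in> V" if "x j \<noteq> 0" for j
    using that idx(2) unfolding x_def by (auto split: if_splits)
  ultimately show ?thesis using that by blast
qed

lemma optimal_weights_support_cospherical:
  fixes a :: "nat \<Rightarrow> 'a::euclidean_space"
  assumes opt: "is_optimal_weights m a y x" and "V \<subseteq> a ` {1..m}" "y \<in> convex hull V"
    and sphere: "\<forall>v\<in>V. dist c v = r" and outside: "\<And>j. j \<in> {1..m} \<Longrightarrow> r \<le> dist c (a j)"
    and "j \<in> {1..m}" "x j \<noteq> 0"
  shows "dist c (a j) = r"
proof -
  have feasible: "feasible_weights m a y x" using opt unfolding is_optimal_weights_def by blast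
  then have x: "(\<Sum>j=1..m. x j) = 1" "\<And>j. j \<in> {1..m} \<Longrightarrow> 0 \<le> x j"
    unfolding feasible_weights_def by auto
  obtain x' where x': "feasible_weights m a y x'" and supp: "\<And>j. j \<in> {1..m} \<Longrightarrow> x' j \<noteq> 0 \<Longrightarrow> a j \<in> V"
    using feasible_weights_supported_on[OF assms(2,3)] by blast
  have "(\<Sum>j=1..m. x' j * (dist c (a j))\<^sup>2) = (\<Sum>j=1..m. x' j * r\<^sup>2)"
  proof (intro sum.cong refl)
    fix j assume "j \<in> {1..m}"
    then show "x' j * (dist c (a j))\<^sup>2 = x' j * r\<^sup>2"
      using supp[of j] sphere by (cases "x' j = 0") auto
  qed
  also have "\<dots> = r\<^sup>2" using x' unfolding feasible_weights_def by (simp add: sum_distrib_right[symmetric])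
  finally have "(\<Sum>j=1..m. x' j * (dist c (a j))\<^sup>2) = r\<^sup>2" .
  moreover have "objective m a y x \<le> objective m a y x'"
    using opt x' unfolding is_optimal_weights_def by blast
  ultimately have "(\<Sum>j=1..m. x j * (dist c (a j))\<^sup>2) \<le> (\<Sum>j=1..m. x j * r\<^sup>2)"
    using x(1) objective_eq_weighted_sq_dist[OF feasible, of c] objective_eq_weighted_sq_dist[OF x', of c]
    by (simp add: sum_distrib_right[symmetric])
  then have sum_le: "(\<Sum>j=1..m. x j * ((dist c (a j))\<^sup>2 - r\<^sup>2)) \<le> 0"
    by (simp add: right_diff_distrib sum_subtractf)
  obtain v where "v \<in> V" using assms(3) by fastforce
  then have "0 \<le> r" using sphere by force
  then have terms: "0 \<le> x j * ((dist c (a j))\<^sup>2 - r\<^sup>2)" if "j \<in> {1..m}" for j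
    using x(2)[OF that] outside[OF that] by (simp add: power_mono)
  have "0 \<le> (\<Sum>j=1..m. x j * ((dist c (a j))\<^sup>2 - r\<^sup>2))" by (rule sum_nonneg) (rule terms)
  then have "(\<Sum>j=1..m. x j * ((dist c (a j))\<^sup>2 - r\<^sup>2)) = 0" using sum_le by linarith
  then have "\<forall>j\<in>{1..m}. x j * ((dist c (a j))\<^sup>2 - r\<^sup>2) = 0"
    by (subst (asm) sum_nonneg_eq_0_iff) (use terms in auto)
  then have "(dist c (a j))\<^sup>2 = r\<^sup>2" using assms(6,7) by force
  then show ?thesis using \<open>0 \<le> r\<close> by (simp add: power2_eq_iff_nonneg)
qed

lemma feasible_weights_convex_hull_support:
  fixes a :: "nat \<Rightarrow> 'a::euclidean_space"
  assumes "feasible_weights m a y x"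
  shows "y \<in> convex hull {a j | j. j \<in> {1..m} \<and> x j \<noteq> 0}"
proof -
  define J where "J = {j \<in> {1..m}. x j \<noteq> 0}"
  have "(\<Sum>j\<in>J. x j) = (\<Sum>j=1..m. x j)" "(\<Sum>j\<in>J. x j *\<^sub>R a j) = (\<Sum>j=1..m. x j *\<^sub>R a j)"
    unfolding J_def by (intro sum.mono_neutral_left; auto)+
  then have "(\<Sum>j\<in>J. x j) = 1" "(\<Sum>j\<in>J. x j *\<^sub>R a j) = y"
    using assms unfolding feasible_weights_def by auto
  moreover have "(\<Sum>j\<in>J. x j *\<^sub>R a j) \<in> convex hull {a j | j. j \<in> {1..m} \<and> x j \<noteq> 0}"
    using \<open>(\<Sum>j\<in>J. x j) = 1\<close> assms unfolding feasible_weights_def J_def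
    by (intro convex_sum) (auto intro: hull_inc)
  ultimately show ?thesis by simp
qed

lemma optimal_weights_support_subset_cell:
  fixes a :: "nat \<Rightarrow> 'a::euclidean_space"
  assumes "is_optimal_weights m a y x" "is_delaunay_triangulation (a ` {1..m}) T"
    and "\<And>T'. is_delaunay_triangulation (a ` {1..m}) T' \<Longrightarrow> T' = T"
    and "V \<in> T" "y \<in> convex hull V"
  shows "{a j | j. j \<in> {1..m} \<and> x j \<noteq> 0} \<subseteq> V"
proof
  fix v assume "v \<in> {a j | j. j \<in> {1..m} \<and> x j \<noteq> 0}"
  then obtain j where j: "j \<in> {1..m}" "x j \<noteq> 0" "v = a j" by blast
  have cell: "is_cell (a ` {1..m}) V" and "empty_circumsphere (a ` {1..m}) V"
    using assms(2,4) unfolding is_delaunay_triangulation_def is_triangulation_def by auto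
  then obtain c r where sphere: "\<forall>v\<in>V. dist c v = r" and outside: "\<forall>p\<in>a ` {1..m}. r \<le> dist c p"
    unfolding empty_circumsphere_def by blast
  have "V \<subseteq> a ` {1..m}" using cell unfolding is_cell_def by blast
  then have "dist c (a j) = r"
    using optimal_weights_support_cospherical[OF assms(1) _ assms(5) sphere _ j(1,2)] outside by blast
  then show "v \<in> V"
    using unique_delaunay_cospherical_vertex[OF _ assms(2-4) sphere] j by blast
qed

theorem theorem2:
  fixes m :: nat and a :: "nat \<Rightarrow> 'a::euclidean_space" and y :: 'a and x :: "nat \<Rightarrow> real"
  assumes "y \<in> convex hull (a ` {1..m})"
    and "is_optimal_weights m a y x"
    and "\<exists>!T. is_delaunay_triangulation (a ` {1..m}) T"
  shows "\<exists>T V F. is_delaunay_triangulation (a ` {1..m}) T \<and> V \<in> T \<and>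
           F face_of convex hull V \<and> y \<in> F \<and>
           {v. v extreme_point_of F} = {a j | j. j \<in> {1..m} \<and> x j \<noteq> 0}"
proof -
  define S where "S = {a j | j. j \<in> {1..m} \<and> x j \<noteq> 0}"
  obtain T where T: "is_delaunay_triangulation (a ` {1..m}) T"
    and unique: "\<And>T'. is_delaunay_triangulation (a ` {1..m}) T' \<Longrightarrow> T' = T"
    using assms(3) by blast
  obtain V where V: "V \<in> T" "y \<in> convex hull V"
    using T assms(1) unfolding is_delaunay_triangulation_def is_triangulation_def by blast
  have "S \<subseteq> V" unfolding S_def by (rule optimal_weights_support_subset_cell[OF assms(2) T unique V])
  have indep: "\<not> affine_dependent V"
    using T V(1) unfolding is_delaunay_triangulation_def is_triangulation_def is_cell_def by blast
  have "convex hull S face_of convex hull V"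
    using face_of_convex_hull_affine_independent[OF indep] \<open>S \<subseteq> V\<close> by blast
  moreover have "{v. v extreme_point_of convex hull S} = S"
    using extreme_point_of_convex_hull_affine_independent[OF affine_independent_subset[OF indep \<open>S \<subseteq> V\<close>]]
    by blast
  moreover have "y \<in> convex hull S"
    using feasible_weights_convex_hull_support assms(2) unfolding is_optimal_weights_def S_def by blast
  ultimately show ?thesis using T V(1) unfolding S_def by blast
qed

end
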